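(* For $d\ge0$ let $\Phi_d(x):=\sum_{n\ge1}A_{d,n}x^{n-1}$ and let $\Phi(x):=\sum_{n\ge1}A_nx^{n-1}$. Then for all $x\ge0$, $\Phi_d(x)\to\Phi(x)$ as $d\to\infty$ (in $[0,\infty]$). Moreover, for all $d\ge0$ and $t\in[0,1)$ there exists $A=A(d,t)<\infty$ such that $\Phi_d(x)\le A$ for all $x\in[0,t]$.
   Context: Rooted unlabeled trees: $\mathcal{X}_0=\{\bullet\}$ consists of the trivial tree. For $d\ge1$, an element $t\in\mathcal{X}_d$ is a family $t=\{N_\tau\}_{\tau\in\mathcal{X}_{d-1}}$ of non-negative integers with finite support ($N_\tau$ is the number of children of the root whose subtree is $\tau$). The size is $|\bullet|=1$ and $|t|=1+\sum_\tau N_\tau|\tau|$. $A_{d,n}$ is the number of $t\in\mathcal{X}_d$ with $|t|=n$ (rooted unlabeled trees with $n$ nodes and depth at most $d$), and $A_n$ is the number of rooted unlabeled trees with $n$ nodes (with no depth restriction). *)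

theory Defs
  imports "HOL-Analysis.Analysis" "HOL-Library.Multiset"
begin

text \<open>Rooted unlabeled (unordered) trees: a node together with the multiset of
  the subtrees rooted at its children.  The multiplicity of a tree \<tau> in the
  multiset is the number N_\<tau> of the paper.\<close>
datatype rtree = Node "rtree multiset"

primrec tree_size :: "rtree \<Rightarrow> nat" where
  "tree_size (Node ts) = Suc (sum_mset (image_mset tree_size ts))"

fun in_X :: "nat \<Rightarrow> rtree \<Rightarrow> bool" where
  "in_X 0 (Node ts) = (ts = {#})"
| "in_X (Suc d) (Node ts) = (\<forall>t\<in>#ts. in_X d t)"

definition A_dn :: "nat \<Rightarrow> nat \<Rightarrow> nat" where
  "A_dn d n = card {t. in_X d t \<and> tree_size t = n}"

definition A_n :: "nat \<Rightarrow> nat" where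
  "A_n n = card {t. tree_size t = n}"

text \<open>Generating functions valued in [0,\<infinity>] (ennreal); the summation index k
  corresponds to n = k+1.\<close>
definition Phi_d :: "nat \<Rightarrow> real \<Rightarrow> ennreal" where
  "Phi_d d x = (\<Sum>k. ennreal (real (A_dn d (Suc k)) * x ^ k))"

definition Phi :: "real \<Rightarrow> ennreal" where
  "Phi x = (\<Sum>k. ennreal (real (A_n (Suc k)) * x ^ k))"

end

theory Submission
  imports Defs
begin

text \<open>
  A tree with n nodes has depth less than n, so A_{d,n} increases with d and equals A_n as soon
  as n \<le> d + 1; the convergence of \<Phi>_d to \<Phi> is therefore monotone convergence of series in
  [0,\<infinity>].  For the bound, a tree of X_{d+1} is a multiset of trees of X_d, so every finite part of
  \<Phi>_{d+1}(x) is at most the Euler product of 1/(1 - x^|\<tau>|) over \<tau> \<in> X_d.  With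
  1/(1 - y) \<le> exp (y/(1 - x)) for y \<le> x < 1 this gives \<Phi>_{d+1}(x) \<le> exp (x \<Phi>_d(x)/(1 - x)),
  and iterating from \<Phi>_0 = 1 bounds \<Phi>_d(t); monotonicity in x makes the bound uniform on [0,t].
\<close>

lemma tree_size_pos: "0 < tree_size t"
  by (cases t) simp

lemma tree_size_child_less: "\<tau> \<in># M \<Longrightarrow> tree_size \<tau> < tree_size (Node M)"
  by (auto dest!: multi_member_split)

lemma size_less_tree_size: "size M < tree_size (Node M)"
proof (induction M)
  case (add \<tau> M)
  then show ?case using tree_size_pos[of \<tau>] by simp
qed simp

lemma in_X_Suc: "in_X d t \<Longrightarrow> in_X (Suc d) t"
  by (induction d t rule: in_X.induct) auto

lemma in_X_if_tree_size_le: "tree_size t \<le> Suc d \<Longrightarrow> in_X d t"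
proof (induction d arbitrary: t)
  case 0
  obtain M where t: "t = Node M" by (cases t)
  have "\<tau> \<notin># M" for \<tau>
    using tree_size_child_less[of \<tau> M] tree_size_pos[of \<tau>] 0 t by auto
  then show ?case using t by auto
next
  case (Suc d)
  obtain M where t: "t = Node M" by (cases t)
  have "in_X d \<tau>" if "\<tau> \<in># M" for \<tau>
    using tree_size_child_less[OF that] Suc.prems t by (intro Suc.IH) simp
  then show ?case using t by simp
qed

lemma finite_tree_size_le: "finite {t. tree_size t \<le> n}"
proof (induction n)
  case 0
  have "{t. tree_size t \<le> 0} = {}"
    using tree_size_pos leD by blast
  then show ?case by (metis finite.emptyI)
next
  case (Suc n)
  let ?S = "{t. tree_size t \<le> n}"
  have "{t. tree_size t \<le> Suc n} \<subseteq> Node ` (\<Union>k\<le>n. multisets_of_size ?S k)"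
  proof
    fix t assume "t \<in> {t. tree_size t \<le> Suc n}"
    moreover obtain M where "t = Node M" by (cases t)
    ultimately have "set_mset M \<subseteq> ?S" "size M \<le> n" "t = Node M"
      using tree_size_child_less[of _ M] size_less_tree_size[of M] by fastforce+
    then show "t \<in> Node ` (\<Union>k\<le>n. multisets_of_size ?S k)"
      by (auto simp: multisets_of_size_def)
  qed
  moreover have "finite (Node ` (\<Union>k\<le>n. multisets_of_size ?S k))"
    using Suc by (intro finite_imageI finite_UN_I) auto
  ultimately show ?case by (rule finite_subset)
qed

lemma finite_tree_size_eq: "finite {t. tree_size t = n}"
  by (rule finite_subset[OF _ finite_tree_size_le[of n]]) auto

lemma A_dn_Suc_ge: "A_dn d n \<le> A_dn (Suc d) n"
  unfolding A_dn_def
  by (rule card_mono) (auto intro: finite_subset[OF _ finite_tree_size_eq] in_X_Suc)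

lemma A_dn_eq_A_n: "n \<le> Suc d \<Longrightarrow> A_dn d n = A_n n"
  unfolding A_dn_def A_n_def
  by (rule arg_cong[where f = card]) (auto intro: in_X_if_tree_size_le)

lemma ennreal_suminf_tendsto_incseq:
  fixes f :: "nat \<Rightarrow> nat \<Rightarrow> ennreal"
  assumes inc: "\<And>k. incseq (\<lambda>d. f d k)" and lim: "\<And>k. (\<lambda>d. f d k) \<longlonglongrightarrow> g k"
  shows "(\<lambda>d. \<Sum>k. f d k) \<longlonglongrightarrow> (\<Sum>k. g k)"
proof -
  have "g k = (SUP d. f d k)" for k
    using LIMSEQ_unique[OF lim LIMSEQ_SUP[OF inc]] .
  then have "(\<Sum>k. g k) = (SUP d. \<Sum>k. f d k)"
    using ennreal_suminf_SUP_eq[OF inc] by simp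
  moreover have "incseq (\<lambda>d. \<Sum>k. f d k)"
    using inc by (simp add: incseq_def suminf_le summableI)
  ultimately show ?thesis
    using LIMSEQ_SUP by simp
qed

lemma Phi_d_tendsto_Phi:
  assumes "0 \<le> x"
  shows "(\<lambda>d. Phi_d d x) \<longlonglongrightarrow> Phi x"
  unfolding Phi_d_def Phi_def
proof (rule ennreal_suminf_tendsto_incseq)
  fix k
  show "incseq (\<lambda>d. ennreal (real (A_dn d (Suc k)) * x ^ k))"
    using A_dn_Suc_ge assms by (auto simp: incseq_Suc_iff intro!: ennreal_leI mult_right_mono)
  have "\<forall>\<^sub>F d in sequentially.
      ennreal (real (A_dn d (Suc k)) * x ^ k) = ennreal (real (A_n (Suc k)) * x ^ k)"
    using eventually_ge_at_top[of k] by eventually_elim (simp add: A_dn_eq_A_n)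
  then show "(\<lambda>d. ennreal (real (A_dn d (Suc k)) * x ^ k)) \<longlonglongrightarrow> ennreal (real (A_n (Suc k)) * x ^ k)"
    by (rule tendsto_eventually)
qed

lemma Phi_d_mono:
  assumes "0 \<le> x" "x \<le> y"
  shows "Phi_d d x \<le> Phi_d d y"
proof -
  have "ennreal (real (A_dn d (Suc k)) * x ^ k) \<le> ennreal (real (A_dn d (Suc k)) * y ^ k)" for k
    using assms by (intro ennreal_leI mult_left_mono power_mono) auto
  then show ?thesis
    unfolding Phi_d_def by (intro suminf_le summableI)
qed

lemma power_sum_mset:
  fixes x :: "'a::comm_monoid_mult"
  shows "x ^ sum_mset (image_mset f M) = prod_mset (image_mset (\<lambda>a. x ^ f a) M)"
  by (induction M) (simp_all add: power_add)

lemma geometric_partial_sum_le: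
  fixes y :: real
  assumes "0 \<le> y" "y < 1"
  shows "(\<Sum>k<n. y ^ k) \<le> 1 / (1 - y)"
proof -
  have "(\<Sum>k<n. y ^ k) \<le> (\<Sum>k. y ^ k)"
    using assms by (intro sum_le_suminf summable_geometric) auto
  also have "\<dots> = 1 / (1 - y)"
    using assms by (simp add: suminf_geometric)
  finally show ?thesis .
qed

lemma sum_prod_mset_le_prod_geometric:
  fixes y :: "'a \<Rightarrow> real"
  assumes G: "finite G" and Ms: "finite Ms" "\<And>M. M \<in> Ms \<Longrightarrow> set_mset M \<subseteq> G"
    and y: "\<And>a. a \<in> G \<Longrightarrow> 0 \<le> y a \<and> y a < 1"
  shows "(\<Sum>M\<in>Ms. prod_mset (image_mset y M)) \<le> (\<Prod>a\<in>G. 1 / (1 - y a))"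
proof -
  define K where "K = Suc (\<Sum>M\<in>Ms. size M)"
  define exps where "exps M = restrict (count M) G" for M
  have prod_exps: "prod_mset (image_mset y M) = (\<Prod>a\<in>G. y a ^ exps M a)" if "M \<in> Ms" for M
  proof -
    have "prod_mset (image_mset y M) = (\<Prod>a\<in>set_mset M. y a ^ count M a)"
      by (rule image_prod_mset_multiplicity)
    also have "\<dots> = (\<Prod>a\<in>G. y a ^ count M a)"
      using Ms(2)[OF that] G by (intro prod.mono_neutral_left) (auto simp: not_in_iff)
    finally show ?thesis by (simp add: exps_def)
  qed
  have inj: "inj_on exps Ms"
  proof (rule inj_onI, rule multiset_eqI)
    fix M M' a assume "M \<in> Ms" "M' \<in> Ms" "exps M = exps M'"
    then show "count M a = count M' a"
    proof (cases "a \<in> G")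
      case True
      with \<open>exps M = exps M'\<close> show ?thesis by (metis exps_def restrict_apply')
    next
      case False
      with \<open>M \<in> Ms\<close> \<open>M' \<in> Ms\<close> have "a \<notin># M" "a \<notin># M'"
        using Ms(2) by blast+
      then show ?thesis by (simp add: not_in_iff)
    qed
  qed
  have exps_bounded: "exps ` Ms \<subseteq> PiE G (\<lambda>_. {..<K})"
  proof -
    have "count M a < K" if "M \<in> Ms" for M a
      using count_le_size[of M a] member_le_sum[OF that, of size] Ms(1) by (simp add: K_def)
    then show ?thesis by (auto simp: exps_def)
  qed
  have "(\<Sum>M\<in>Ms. prod_mset (image_mset y M)) = (\<Sum>M\<in>Ms. \<Prod>a\<in>G. y a ^ exps M a)"
    by (rule sum.cong) (simp_all add: prod_exps)
  also have "\<dots> = (\<Sum>e\<in>exps ` Ms. \<Prod>a\<in>G. y a ^ e a)"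
    using inj by (simp add: sum.reindex)
  also have "\<dots> \<le> (\<Sum>e\<in>PiE G (\<lambda>_. {..<K}). \<Prod>a\<in>G. y a ^ e a)"
    using exps_bounded G y by (intro sum_mono2 finite_PiE prod_nonneg) auto
  also have "\<dots> = (\<Prod>a\<in>G. \<Sum>k<K. y a ^ k)"
    using G by (simp add: prod_sum_PiE)
  also have "\<dots> \<le> (\<Prod>a\<in>G. 1 / (1 - y a))"
    using y by (intro prod_mono) (auto intro!: sum_nonneg geometric_partial_sum_le)
  finally show ?thesis .
qed

fun Phi_d_majorant :: "nat \<Rightarrow> real \<Rightarrow> real" where
  "Phi_d_majorant 0 x = 1"
| "Phi_d_majorant (Suc d) x = exp (x * Phi_d_majorant d x / (1 - x))"

lemma inverse_one_minus_le_exp: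
  fixes x y :: real
  assumes "0 \<le> y" "y \<le> x" "x < 1"
  shows "1 / (1 - y) \<le> exp (y / (1 - x))"
proof -
  have "1 / (1 - y) = 1 + y / (1 - y)"
    using assms by (simp add: field_simps)
  also have "\<dots> \<le> 1 + y / (1 - x)"
    using assms by (intro add_left_mono divide_left_mono) auto
  also have "\<dots> \<le> exp (y / (1 - x))"
    by (rule exp_ge_add_one_self)
  finally show ?thesis .
qed

lemma sum_in_X_le_Phi_d_majorant:
  fixes x :: real
  assumes x: "0 \<le> x" "x < 1"
  shows "finite F \<Longrightarrow> (\<And>t. t \<in> F \<Longrightarrow> in_X d t) \<Longrightarrow>
    (\<Sum>t\<in>F. x ^ (tree_size t - 1)) \<le> Phi_d_majorant d x"
proof (induction d arbitrary: F)
  case 0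
  have "t = Node {#}" if "t \<in> F" for t
    using "0.prems"(2)[OF that] by (cases t) auto
  then have "F = {} \<or> F = {Node {#}}"
    by blast
  then show ?case by auto
next
  case (Suc d)
  define Ms where "Ms = Node -` F"
  define G where "G = (\<Union>M\<in>Ms. set_mset M)"
  define y where "y \<tau> = x ^ tree_size \<tau>" for \<tau>
  have F: "F = Node ` Ms"
    unfolding Ms_def by (metis rtree.exhaust image_vimage_eq inf.absorb1 subsetI rangeI)
  have "finite Ms"
    using Suc.prems(1) by (simp add: Ms_def finite_vimageI inj_on_def)
  then have "finite G"
    by (simp add: G_def)
  have G_in_X: "in_X d \<tau>" if "\<tau> \<in> G" for \<tau>
    using that Suc.prems(2) by (fastforce simp: G_def Ms_def)
  have y: "0 \<le> y \<tau>" "y \<tau> \<le> x" "y \<tau> < 1" for \<tau>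
    using power_decreasing[of 1 "tree_size \<tau>" x] tree_size_pos[of \<tau>] x by (simp_all add: y_def)
  have "(\<Sum>t\<in>F. x ^ (tree_size t - 1)) = (\<Sum>M\<in>Ms. prod_mset (image_mset y M))"
    unfolding F by (simp add: sum.reindex inj_on_def power_sum_mset y_def[abs_def])
  also have "\<dots> \<le> (\<Prod>\<tau>\<in>G. 1 / (1 - y \<tau>))"
    using \<open>finite G\<close> \<open>finite Ms\<close> y x
    by (intro sum_prod_mset_le_prod_geometric) (auto simp: G_def)
  also have "\<dots> \<le> (\<Prod>\<tau>\<in>G. exp (y \<tau> / (1 - x)))"
    using y x by (intro prod_mono conjI inverse_one_minus_le_exp) (auto simp: less_imp_le)
  also have "\<dots> = exp (x * (\<Sum>\<tau>\<in>G. x ^ (tree_size \<tau> - 1)) / (1 - x))"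
  proof -
    have "y \<tau> = x * x ^ (tree_size \<tau> - 1)" for \<tau>
      using tree_size_pos[of \<tau>] by (cases "tree_size \<tau>") (simp_all add: y_def)
    then show ?thesis
      using \<open>finite G\<close> by (simp add: exp_sum sum_divide_distrib sum_distrib_left)
  qed
  also have "\<dots> \<le> exp (x * Phi_d_majorant d x / (1 - x))"
    using Suc.IH[OF \<open>finite G\<close> G_in_X] x by (simp add: divide_right_mono mult_left_mono)
  finally show ?case by simp
qed

lemma Phi_d_le_majorant:
  assumes x: "0 \<le> x" "x < 1"
  shows "Phi_d d x \<le> ennreal (Phi_d_majorant d x)"
proof -
  have "(\<Sum>k<N. ennreal (real (A_dn d (Suc k)) * x ^ k)) \<le> ennreal (Phi_d_majorant d x)" for N
  proof -
    define T where "T k = {t. in_X d t \<and> tree_size t = Suc k}" for k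
    have finite_T: "finite (T k)" for k
      unfolding T_def by (rule finite_subset[OF _ finite_tree_size_eq]) auto
    have "(\<Sum>k<N. real (A_dn d (Suc k)) * x ^ k) = (\<Sum>k<N. \<Sum>t\<in>T k. x ^ (tree_size t - 1))"
      by (intro sum.cong) (auto simp: T_def A_dn_def)
    also have "\<dots> = (\<Sum>t\<in>(\<Union>k<N. T k). x ^ (tree_size t - 1))"
      using finite_T by (intro sum.UNION_disjoint[symmetric]) (auto simp: T_def)
    also have "\<dots> \<le> Phi_d_majorant d x"
      using finite_T x by (intro sum_in_X_le_Phi_d_majorant) (auto simp: T_def)
    finally show ?thesis
      using x by (subst sum_ennreal) (auto intro!: ennreal_leI)
  qed
  then show ?thesis
    unfolding Phi_d_def suminf_eq_SUP by (intro SUP_least)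
qed

theorem proposition2:
  shows "(\<forall>x::real. x \<ge> 0 \<longrightarrow> (\<lambda>d. Phi_d d x) \<longlonglongrightarrow> Phi x)
    \<and> (\<forall>d::nat. \<forall>t::real. 0 \<le> t \<and> t < 1 \<longrightarrow>
          (\<exists>A::real. \<forall>x\<in>{0..t}. Phi_d d x \<le> ennreal A))"
proof (intro conjI allI impI)
  fix x :: real
  assume "x \<ge> 0"
  then show "(\<lambda>d. Phi_d d x) \<longlonglongrightarrow> Phi x"
    by (rule Phi_d_tendsto_Phi)
next
  fix d :: nat and t :: real
  assume "0 \<le> t \<and> t < 1"
  then have "Phi_d d x \<le> ennreal (Phi_d_majorant d t)" if "x \<in> {0..t}" for x
    using that Phi_d_mono[of x t d] Phi_d_le_majorant[of t d] by auto
  then show "\<exists>A::real. \<forall>x\<in>{0..t}. Phi_d d x \<le> ennreal A"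
    by blast
qed

end
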